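(* For each $i\in\{1,2\}$ let $s_i\in\mathbb{S}^1\subset\mathbb{R}^2$, $t_i\ge0$ and $w_i=(s_it_i,0)\in\mathbb{R}^3$. Then \[d_{\mathbb{H}}(w_1,w_2)\simeq|t_1-t_2|+(t_1\wedge t_2)|s_1-s_2|^{1/2},\] with universal implicit constants.
   Context: For $w=(x,y,z)$, $w'=(x',y',z')$, $d_{\mathbb{H}}(w,w')=|x-x'|+|y-y'|+|z-z'+\tfrac12(xy'-x'y)|^{1/2}$. $t_1\wedge t_2=\min\{t_1,t_2\}$. $a\simeq b$ means $C^{-1}b\le a\le Cb$ for a universal constant $C$. *)

theory Defs
  imports "HOL-Analysis.Analysis"
begin

definition dH :: "real \<times> real \<times> real \<Rightarrow> real \<times> real \<times> real \<Rightarrow> real" where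
  "dH w w' = (case w of (x, y, z) \<Rightarrow> case w' of (x', y', z') \<Rightarrow>
     \<bar>x - x'\<bar> + \<bar>y - y'\<bar> + sqrt \<bar>z - z' + (1/2) * (x * y' - x' * y)\<bar>)"

definition lift :: "real \<times> real \<Rightarrow> real \<Rightarrow> real \<times> real \<times> real" where
  "lift s t = (fst s * t, snd s * t, 0)"

end

theory Submission
  imports Defs
begin

text \<open>
  Write \<open>D = |s\<^sub>1 - s\<^sub>2|\<close>; since \<open>d\<^sub>H\<close> is symmetric we may assume \<open>t\<^sub>1 \<le> t\<^sub>2\<close>. The horizontal part of the distance is
  comparable to \<open>|t\<^sub>1 s\<^sub>1 - t\<^sub>2 s\<^sub>2|\<close>, whose square is \<open>(t\<^sub>2 - t\<^sub>1)\<^sup>2 + t\<^sub>1 t\<^sub>2 D\<^sup>2\<close>, and the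
  vertical part is \<open>(t\<^sub>1 t\<^sub>2 |s\<^sub>1 \<times> s\<^sub>2| / 2)\<^sup>1\<^sup>/\<^sup>2\<close>, where for unit vectors
  \<open>(s\<^sub>1 \<times> s\<^sub>2)\<^sup>2 = D\<^sup>2 (1 - D\<^sup>2/4)\<close>, so \<open>|s\<^sub>1 \<times> s\<^sub>2| \<simeq> D\<close> as long as \<open>D \<le> 1\<close>.
  Both parts are bounded by \<open>t\<^sub>1 t\<^sub>2 D \<le> ((t\<^sub>2 - t\<^sub>1) + t\<^sub>1 D\<^sup>1\<^sup>/\<^sup>2)\<^sup>2\<close>. Conversely
  \<open>t\<^sub>1 D\<^sup>1\<^sup>/\<^sup>2\<close> is controlled by the vertical part when \<open>D \<le> 1\<close> and by the horizontal part
  (through \<open>t\<^sub>1 D\<close>) when \<open>D > 1\<close>.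
\<close>

definition cross2 :: "real \<times> real \<Rightarrow> real \<times> real \<Rightarrow> real" where
  "cross2 x y = fst x * snd y - snd x * fst y"

lemma dH_commute: "dH w w' = dH w' w"
proof -
  obtain x y z x' y' z' where "w = (x, y, z)" "w' = (x', y', z')" by (cases w, cases w')
  then show ?thesis
    unfolding dH_def by (simp add: abs_minus_commute abs_minus_commute[of "z - z'"] algebra_simps)
qed

lemma norm_diff_sq_unit:
  fixes x y :: "'a::real_inner"
  assumes "norm x = 1" "norm y = 1"
  shows "(norm (x - y))\<^sup>2 = 2 - 2 * inner x y"
  using assms dot_norm_neg[of x y] by (simp add: field_simps)

lemma norm_diff_le_2:
  fixes x y :: "'a::real_normed_vector"
  assumes "norm x = 1" "norm y = 1"
  shows "norm (x - y) \<le> 2"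
  using norm_triangle_ineq4[of x y] assms by simp

lemma norm_scaleR_diff_sq_unit:
  fixes x y :: "'a::real_inner"
  assumes "norm x = 1" "norm y = 1"
  shows "(norm (a *\<^sub>R x - b *\<^sub>R y))\<^sup>2 = (a - b)\<^sup>2 + a * b * (norm (x - y))\<^sup>2"
proof -
  have "inner x x = 1" "inner y y = 1"
    using assms by (simp_all add: dot_square_norm)
  then show ?thesis
    by (simp only: power2_norm_eq_inner)
      (simp add: inner_diff_left inner_diff_right inner_commute[of y x] power2_eq_square algebra_simps)
qed

lemma cross2_sq_add_inner_sq: "(cross2 x y)\<^sup>2 + (inner x y)\<^sup>2 = (norm x)\<^sup>2 * (norm y)\<^sup>2"
  by (cases x, cases y) (simp only: power2_norm_eq_inner, simp add: cross2_def power2_eq_square algebra_simps)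

lemma cross2_sq_unit:
  assumes "norm x = 1" "norm y = 1"
  shows "(cross2 x y)\<^sup>2 = (norm (x - y))\<^sup>2 * (1 - (norm (x - y))\<^sup>2 / 4)"
proof -
  have "inner x y = 1 - (norm (x - y))\<^sup>2 / 2"
    using norm_diff_sq_unit[OF assms] by linarith
  moreover have "(cross2 x y)\<^sup>2 = 1 - (inner x y)\<^sup>2"
    using cross2_sq_add_inner_sq[of x y] assms by simp
  ultimately have "(cross2 x y)\<^sup>2 = 1 - (1 - (norm (x - y))\<^sup>2 / 2)\<^sup>2"
    by simp
  then show ?thesis
    by (simp add: power2_eq_square field_simps)
qed

lemma abs_cross2_le_norm_diff:
  assumes "norm x = 1" "norm y = 1"
  shows "\<bar>cross2 x y\<bar> \<le> norm (x - y)"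
proof -
  have "(cross2 x y)\<^sup>2 \<le> (norm (x - y))\<^sup>2"
    unfolding cross2_sq_unit[OF assms] by (rule mult_left_le) simp_all
  then show ?thesis
    using abs_le_square_iff[of "cross2 x y" "norm (x - y)"] by simp
qed

lemma half_norm_diff_le_abs_cross2:
  assumes "norm x = 1" "norm y = 1" and "norm (x - y) \<le> 1"
  shows "norm (x - y) / 2 \<le> \<bar>cross2 x y\<bar>"
proof -
  have "d / 4 \<le> d * (1 - d / 4)" if "0 \<le> d" "d \<le> 1" for d :: real
    using mult_left_le[OF that(2,1)] that(1) by (simp add: algebra_simps)
  moreover have "(norm (x - y))\<^sup>2 \<le> 1"
    using assms(3) by (simp add: power_le_one)
  ultimately have "(norm (x - y) / 2)\<^sup>2 \<le> (cross2 x y)\<^sup>2"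
    unfolding cross2_sq_unit[OF assms(1,2)] by (simp add: power_divide)
  then show ?thesis
    using abs_le_square_iff[of "norm (x - y) / 2" "cross2 x y"] by simp
qed

lemma mult_le_sq_radius:
  fixes t1 t2 D :: real
  assumes "0 \<le> t1" "t1 \<le> t2" "0 \<le> D" "D \<le> 4"
  shows "t1 * t2 * D \<le> ((t2 - t1) + t1 * sqrt D)\<^sup>2"
proof -
  define p where "p = t2 - t1"
  define r where "r = sqrt D"
  have "0 \<le> p" "0 \<le> r" "r \<le> 2"
    using assms real_sqrt_le_mono[of D 4] by (auto simp: p_def r_def)
  then have "t1 * p * r * r \<le> t1 * p * r * 2"
    using assms(1) by (intro mult_left_mono) auto
  moreover have "t1 * t2 * D = t1 * t1 * r * r + t1 * p * r * r"
    using assms(3) by (simp add: p_def r_def algebra_simps)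
  moreover have "((t2 - t1) + t1 * sqrt D)\<^sup>2 = p * p + 2 * (t1 * p * r) + t1 * t1 * r * r"
    using assms(3) by (simp add: p_def r_def power2_eq_square algebra_simps)
  ultimately show ?thesis
    using zero_le_square[of p] by linarith
qed

lemma dH_lift:
  "dH (lift s1 t1) (lift s2 t2) =
     \<bar>fst (t1 *\<^sub>R s1 - t2 *\<^sub>R s2)\<bar> + \<bar>snd (t1 *\<^sub>R s1 - t2 *\<^sub>R s2)\<bar> +
     sqrt (\<bar>t1 * t2 * cross2 s1 s2\<bar> / 2)"
proof -
  have "t1 * fst s1 * (t2 * snd s2) - t1 * snd s1 * (t2 * fst s2) = t1 * t2 * cross2 s1 s2"
    by (simp add: cross2_def algebra_simps)
  then show ?thesis
    by (simp add: dH_def lift_def mult.commute)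
qed

lemma dH_lift_bounds:
  fixes s1 s2 :: "real \<times> real" and t1 t2 :: real
  defines "E \<equiv> norm (t1 *\<^sub>R s1 - t2 *\<^sub>R s2)"
    and "V \<equiv> sqrt (\<bar>t1 * t2 * cross2 s1 s2\<bar> / 2)"
  shows "E + V \<le> dH (lift s1 t1) (lift s2 t2)" and "dH (lift s1 t1) (lift s2 t2) \<le> 2 * E + V"
proof -
  obtain u v where uv: "t1 *\<^sub>R s1 - t2 *\<^sub>R s2 = (u, v)"
    by fastforce
  have "dH (lift s1 t1) (lift s2 t2) = \<bar>u\<bar> + \<bar>v\<bar> + V"
    unfolding dH_lift uv V_def by simp
  moreover have "E \<le> \<bar>u\<bar> + \<bar>v\<bar>"
    using norm_Pair_le[of u v] by (simp add: E_def uv)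
  moreover have "\<bar>u\<bar> \<le> E" "\<bar>v\<bar> \<le> E"
    using norm_fst_le[of u v] norm_snd_le[of v u] by (simp_all add: E_def uv)
  ultimately show "E + V \<le> dH (lift s1 t1) (lift s2 t2)" "dH (lift s1 t1) (lift s2 t2) \<le> 2 * E + V"
    by linarith+
qed

lemma dH_lift_le:
  assumes unit: "norm s1 = 1" "norm s2 = 1" and t: "0 \<le> t1" "t1 \<le> t2"
  shows "dH (lift s1 t1) (lift s2 t2) \<le> 5 * ((t2 - t1) + t1 * sqrt (norm (s1 - s2)))"
proof -
  define D where "D = norm (s1 - s2)"
  define E where "E = norm (t1 *\<^sub>R s1 - t2 *\<^sub>R s2)"
  define R where "R = (t2 - t1) + t1 * sqrt D"
  have D: "0 \<le> D" "D \<le> 2"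
    using norm_diff_le_2[OF unit] by (simp_all add: D_def)
  have "t2 - t1 \<le> R"
    using t D by (simp add: R_def)
  have tD: "t1 * t2 * D \<le> R\<^sup>2"
    unfolding R_def using mult_le_sq_radius[of t1 t2 D] t D by simp
  have "0 \<le> t1 * t2 * D"
    using t D by simp
  have "E\<^sup>2 = (t1 - t2)\<^sup>2 + t1 * t2 * D * D"
    unfolding E_def D_def norm_scaleR_diff_sq_unit[OF unit] by (simp add: power2_eq_square)
  also have "\<dots> \<le> R\<^sup>2 + t1 * t2 * D * 2"
  proof (rule add_mono)
    show "(t1 - t2)\<^sup>2 \<le> R\<^sup>2"
      unfolding power2_commute[of t1] using \<open>t2 - t1 \<le> R\<close> t by (intro power_mono) simp_all
    show "t1 * t2 * D * D \<le> t1 * t2 * D * 2"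
      using \<open>D \<le> 2\<close> \<open>0 \<le> t1 * t2 * D\<close> by (rule mult_left_mono)
  qed
  also have "\<dots> \<le> 4 * R\<^sup>2"
    using tD zero_le_power2[of R] by linarith
  also have "\<dots> = (2 * R)\<^sup>2"
    by (simp add: power_mult_distrib)
  finally have "E \<le> 2 * R"
    by (rule power2_le_imp_le) (use \<open>t2 - t1 \<le> R\<close> t in linarith)
  have "\<bar>t1 * t2 * cross2 s1 s2\<bar> = t1 * t2 * \<bar>cross2 s1 s2\<bar>"
    using t by (simp add: abs_mult)
  also have "\<dots> \<le> t1 * t2 * D"
    using abs_cross2_le_norm_diff[OF unit] t unfolding D_def by (intro mult_left_mono) simp_all
  finally have "\<bar>t1 * t2 * cross2 s1 s2\<bar> / 2 \<le> t1 * t2 * D"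
    using \<open>0 \<le> t1 * t2 * D\<close> by linarith
  then have "sqrt (\<bar>t1 * t2 * cross2 s1 s2\<bar> / 2) \<le> R"
    using tD \<open>t2 - t1 \<le> R\<close> t by (intro real_le_lsqrt) simp_all
  moreover have "dH (lift s1 t1) (lift s2 t2) \<le> 2 * E + sqrt (\<bar>t1 * t2 * cross2 s1 s2\<bar> / 2)"
    unfolding E_def by (rule dH_lift_bounds(2))
  ultimately have "dH (lift s1 t1) (lift s2 t2) \<le> 5 * R"
    using \<open>E \<le> 2 * R\<close> by linarith
  then show ?thesis
    by (simp add: R_def D_def)
qed

lemma dH_lift_ge:
  assumes unit: "norm s1 = 1" "norm s2 = 1" and t: "0 \<le> t1" "t1 \<le> t2"
  shows "(t2 - t1) + t1 * sqrt (norm (s1 - s2)) \<le> 3 * dH (lift s1 t1) (lift s2 t2)"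
proof -
  define D where "D = norm (s1 - s2)"
  define E where "E = norm (t1 *\<^sub>R s1 - t2 *\<^sub>R s2)"
  define V where "V = sqrt (\<bar>t1 * t2 * cross2 s1 s2\<bar> / 2)"
  define R where "R = (t2 - t1) + t1 * sqrt D"
  have "0 \<le> D" "0 \<le> E" "0 \<le> V"
    by (simp_all add: D_def E_def V_def)
  have E_sq: "E\<^sup>2 = (t2 - t1)\<^sup>2 + t1 * t2 * D\<^sup>2"
    unfolding E_def D_def norm_scaleR_diff_sq_unit[OF unit] by (simp add: power2_commute)
  have "0 \<le> t1 * t2 * D\<^sup>2"
    using t by simp
  have "t2 - t1 \<le> E"
    by (rule power2_le_imp_le) (use E_sq \<open>0 \<le> t1 * t2 * D\<^sup>2\<close> \<open>0 \<le> E\<close> in linarith)+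
  have "t1 * sqrt D \<le> 2 * E + 2 * V"
  proof (cases "D \<le> 1")
    case True
    have "D \<le> 2 * \<bar>cross2 s1 s2\<bar>"
      using half_norm_diff_le_abs_cross2[OF unit] True by (simp add: D_def)
    have "(t1 * sqrt D)\<^sup>2 = t1 * t1 * D"
      using \<open>0 \<le> D\<close> by (simp add: power_mult_distrib power2_eq_square)
    also have "\<dots> \<le> t1 * t2 * D"
      using t \<open>0 \<le> D\<close> by (intro mult_right_mono mult_left_mono) simp_all
    also have "\<dots> \<le> t1 * t2 * (2 * \<bar>cross2 s1 s2\<bar>)"
      using t \<open>D \<le> 2 * \<bar>cross2 s1 s2\<bar>\<close> by (intro mult_left_mono) simp_all
    also have "\<dots> = (2 * V)\<^sup>2"
      using t by (simp add: V_def power_mult_distrib abs_mult)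
    finally have "t1 * sqrt D \<le> 2 * V"
      by (rule power2_le_imp_le) (use \<open>0 \<le> V\<close> in simp)
    with \<open>0 \<le> E\<close> show ?thesis
      by simp
  next
    case False
    then have "sqrt D \<le> D"
      by (intro real_le_lsqrt) (simp_all add: power2_eq_square)
    then have "t1 * sqrt D \<le> t1 * D"
      using t(1) by (rule mult_left_mono)
    also have "\<dots> \<le> E"
    proof (rule power2_le_imp_le)
      have "(t1 * D)\<^sup>2 = t1 * t1 * D\<^sup>2"
        by (simp add: power2_eq_square)
      also have "\<dots> \<le> t1 * t2 * D\<^sup>2"
        using t by (intro mult_right_mono mult_left_mono) simp_all
      finally show "(t1 * D)\<^sup>2 \<le> E\<^sup>2"
        using E_sq zero_le_power2[of "t2 - t1"] by linarith
    qed (rule \<open>0 \<le> E\<close>)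
    finally show ?thesis
      using \<open>0 \<le> E\<close> \<open>0 \<le> V\<close> by linarith
  qed
  moreover have "E + V \<le> dH (lift s1 t1) (lift s2 t2)"
    unfolding E_def V_def by (rule dH_lift_bounds(1))
  ultimately have "R \<le> 3 * dH (lift s1 t1) (lift s2 t2)"
    using \<open>t2 - t1 \<le> E\<close> \<open>0 \<le> V\<close> unfolding R_def by linarith
  then show ?thesis
    by (simp add: R_def D_def)
qed

lemma dH_lift_comparable:
  assumes unit: "norm s1 = 1" "norm s2 = 1" and t: "0 \<le> t1" "0 \<le> t2"
  defines "R \<equiv> \<bar>t1 - t2\<bar> + min t1 t2 * sqrt (norm (s1 - s2))"
  shows "R \<le> 3 * dH (lift s1 t1) (lift s2 t2)" and "dH (lift s1 t1) (lift s2 t2) \<le> 5 * R"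
proof -
  have "R \<le> 3 * dH (lift s1 t1) (lift s2 t2) \<and> dH (lift s1 t1) (lift s2 t2) \<le> 5 * R"
  proof (cases "t1 \<le> t2")
    case True
    then show ?thesis
      using dH_lift_ge[OF unit t(1) True] dH_lift_le[OF unit t(1) True] by (simp add: R_def)
  next
    case False
    then have le: "t2 \<le> t1" by simp
    show ?thesis
      using dH_lift_ge[OF unit(2,1) t(2) le] dH_lift_le[OF unit(2,1) t(2) le] le
      by (simp add: R_def dH_commute[of "lift s1 t1"] norm_minus_commute[of s2])
  qed
  then show "R \<le> 3 * dH (lift s1 t1) (lift s2 t2)" "dH (lift s1 t1) (lift s2 t2) \<le> 5 * R"
    by simp_all
qed

theorem lemma3p3:
  "\<exists>C>0. \<forall>(s1::real \<times> real) s2 (t1::real) t2.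
      s1 \<in> sphere 0 1 \<longrightarrow> s2 \<in> sphere 0 1 \<longrightarrow> t1 \<ge> 0 \<longrightarrow> t2 \<ge> 0 \<longrightarrow>
      (let R = \<bar>t1 - t2\<bar> + min t1 t2 * sqrt (norm (s1 - s2)) in
         R / C \<le> dH (lift s1 t1) (lift s2 t2) \<and> dH (lift s1 t1) (lift s2 t2) \<le> C * R)"
proof -
  have "R / 5 \<le> dH (lift s1 t1) (lift s2 t2) \<and> dH (lift s1 t1) (lift s2 t2) \<le> 5 * R"
    if "s1 \<in> sphere 0 1" "s2 \<in> sphere 0 1" "0 \<le> t1" "0 \<le> t2"
      and R: "R = \<bar>t1 - t2\<bar> + min t1 t2 * sqrt (norm (s1 - s2))"
    for s1 s2 :: "real \<times> real" and t1 t2 R :: real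
  proof -
    have unit: "norm s1 = 1" "norm s2 = 1"
      using that(1,2) by simp_all
    have "0 \<le> R"
      using that(3,4) by (simp add: R)
    then show ?thesis
      using dH_lift_comparable[OF unit that(3,4), folded R] by linarith
  qed
  then show ?thesis
    by (intro exI[of _ 5]) (simp add: Let_def)
qed

end
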